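(* Let $\{(\mathbf{x}_i,y_i)\}_{i=1}^m$ be training data with $\mathbf{x}_i\in\mathbb{R}^l$, $y_i\in\mathbb{R}$, let $k$ be a positive semidefinite kernel with kernel matrix $K\in\mathbb{R}^{m\times m}$, $K_{ij}=k(\mathbf{x}_i,\mathbf{x}_j)$, and let $K_{iM}$ denote the $i$-th row of $K$. Let $\lambda>0$, $\tau\ge 0$, and $L_\tau(\xi)=\frac12\min\{\xi^2,\tau^2\}$. Consider the primal robust LSSVM problem $$\min_{\alpha\in\mathbb{R}^m,\,b\in\mathbb{R}}\ \frac{\lambda}{2}\alpha^\top K\alpha+\frac1m\sum_{i=1}^m L_\tau\big(y_i-K_{iM}\alpha-b\big).$$ Then any stationary point of this problem can be obtained by solving an iteratively re-weighted LSSVM $$(\alpha^{(t)},b^{(t)})=\arg\min_{\alpha\in\mathbb{R}^m,\,b\in\mathbb{R}}\ \frac{\lambda}{2}\alpha^\top K\alpha+\frac{1}{2m}\sum_{i=1}^m\omega_i^{(t-1)}\big(y_i-K_{iM}\alpha-b\big)^2,$$ where $\omega_i^{(t)}$ is the value of the weight $\omega_i$ at iteration $t$, given by $\omega_i^{(t)}=1$ if $|\xi_i^{(t)}|\le\tau$ and $\omega_i^{(t)}=0$ if $|\xi_i^{(t)}|>\tau$, with $\xi_i^{(t)}=y_i-K_{iM}\alpha^{(t)}-b^{(t)}$.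
   Context: The weight update corresponds to $\omega^{(t)}\in\arg\min_{\omega\in\mathbb{R}_+^m}J(\alpha^{(t)},b^{(t)},\omega)$, where $J(\alpha,b,\omega)=\frac{\lambda}{2}\alpha^\top K\alpha+\frac1m\sum_{i=1}^m\frac12\omega_i\xi_i^2+\frac1m\sum_{i=1}^m\frac{\tau^2}{2}(1-\omega_i)_+$ and $\xi_i=y_i-K_{iM}\alpha-b$; the iteration alternates minimization of $J$ in $(\alpha,b)$ and in $\omega$. *)

theory Defs
  imports "HOL-Analysis.Analysis"
begin

definition psd_kernel :: "('a \<Rightarrow> 'a \<Rightarrow> real) \<Rightarrow> bool" where
  "psd_kernel k \<longleftrightarrow> (\<forall>u v. k u v = k v u) \<and>
     (\<forall>(n::nat) (z::nat \<Rightarrow> 'a) (c::nat \<Rightarrow> real).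
        0 \<le> (\<Sum>i<n. \<Sum>j<n. c i * c j * k (z i) (z j)))"

definition kernel_matrix :: "('a \<Rightarrow> 'a \<Rightarrow> real) \<Rightarrow> ('m::finite \<Rightarrow> 'a) \<Rightarrow> real^'m^'m" where
  "kernel_matrix k x = (\<chi> i j. k (x i) (x j))"

definition L_tau :: "real \<Rightarrow> real \<Rightarrow> real" where
  "L_tau \<tau> \<xi> = (1/2) * min (\<xi>\<^sup>2) (\<tau>\<^sup>2)"

definition resid :: "real^'m^'m \<Rightarrow> real^'m \<Rightarrow> real^'m \<Rightarrow> real \<Rightarrow> 'm::finite \<Rightarrow> real" where
  "resid K y \<alpha> b i = y $ i - (K *v \<alpha>) $ i - b"

definition robust_obj :: "real \<Rightarrow> real \<Rightarrow> real^'m^'m \<Rightarrow> real^'m \<Rightarrow> (real^'m) \<times> real \<Rightarrow> real" where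
  "robust_obj lam \<tau> K y p =
     (lam/2) * (fst p \<bullet> (K *v fst p))
     + (1 / real CARD('m::finite)) * (\<Sum>i\<in>UNIV. L_tau \<tau> (resid K y (fst p) (snd p) i))"

definition weighted_obj :: "real \<Rightarrow> real^'m^'m \<Rightarrow> real^'m \<Rightarrow> ('m \<Rightarrow> real) \<Rightarrow> real^'m \<Rightarrow> real \<Rightarrow> real" where
  "weighted_obj lam K y \<omega> \<alpha> b =
     (lam/2) * (\<alpha> \<bullet> (K *v \<alpha>))
     + (1 / (2 * real CARD('m::finite))) * (\<Sum>i\<in>UNIV. \<omega> i * (resid K y \<alpha> b i)\<^sup>2)"

definition weights :: "real \<Rightarrow> real^'m^'m \<Rightarrow> real^'m \<Rightarrow> real^'m \<Rightarrow> real \<Rightarrow> 'm::finite \<Rightarrow> real" where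
  "weights \<tau> K y \<alpha> b i = (if \<bar>resid K y \<alpha> b i\<bar> \<le> \<tau> then 1 else 0)"

end

theory Submission
  imports Defs
begin

text \<open>The surrogate \<open>J(\<alpha>, b, \<omega>)\<close> of the alternating scheme majorises the robust objective
  for every weight vector with entries in \<open>[0, 1]\<close>, and touches it at \<open>(\<alpha>, b)\<close> when \<open>\<omega>\<close> is
  the weight vector computed from the residuals at \<open>(\<alpha>, b)\<close>. At a stationary point of the robust
  objective the surrogate, minus the robust objective, has a minimum with value zero, so the
  surrogate is stationary there as well. Along every line the surrogate is a quadratic polynomial
  whose leading coefficient is nonnegative (the kernel matrix is positive semidefinite and the
  weights are nonnegative); vanishing of its linear coefficient makes \<open>(\<alpha>, b)\<close> a global minimiser,
  which is the weighted LSSVM step.\<close>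

lemma psd_kernel_quadratic_form_nonneg:
  fixes x :: "'m::finite \<Rightarrow> 'a" and u :: "real^'m"
  assumes "psd_kernel k"
  shows "0 \<le> u \<bullet> (kernel_matrix k x *v u)"
proof -
  obtain h where h: "bij_betw h {..<CARD('m)} (UNIV :: 'm set)"
    using ex_bij_betw_nat_finite[of "UNIV :: 'm set"] by (auto simp: lessThan_atLeast0)
  have reindex: "(\<Sum>j<CARD('m). g (h j)) = (\<Sum>j\<in>UNIV. g j)" for g :: "'m \<Rightarrow> real"
    using sum.reindex_bij_betw[OF h] by simp
  have "0 \<le> (\<Sum>i<CARD('m). \<Sum>j<CARD('m). u $ h i * u $ h j * k (x (h i)) (x (h j)))"
    using assms[unfolded psd_kernel_def, THEN conjunct2, rule_format,
        where n = "CARD('m)" and z = "x \<circ> h" and c = "\<lambda>i. u $ h i"]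
    by simp
  also have "\<dots> = (\<Sum>i<CARD('m). \<Sum>j\<in>UNIV. u $ h i * u $ j * k (x (h i)) (x j))"
    by (intro sum.cong refl reindex)
  also have "\<dots> = (\<Sum>i\<in>UNIV. \<Sum>j\<in>UNIV. u $ i * u $ j * k (x i) (x j))"
    by (rule reindex)
  also have "\<dots> = u \<bullet> (kernel_matrix k x *v u)"
    unfolding inner_vec_def matrix_vector_mult_def kernel_matrix_def
    by (simp add: sum_distrib_left mult_ac)
  finally show ?thesis .
qed

lemma L_tau_le_convex_combination:
  assumes "0 \<le> w" and "w \<le> 1"
  shows "L_tau \<tau> \<xi> \<le> (w * \<xi>\<^sup>2 + (1 - w) * \<tau>\<^sup>2) / 2"
proof -
  have "w * min (\<xi>\<^sup>2) (\<tau>\<^sup>2) \<le> w * \<xi>\<^sup>2" and "(1 - w) * min (\<xi>\<^sup>2) (\<tau>\<^sup>2) \<le> (1 - w) * \<tau>\<^sup>2"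
    using assms by (simp_all add: mult_left_mono)
  then show ?thesis
    unfolding L_tau_def by argo
qed

lemma L_tau_eq_if:
  assumes "0 \<le> \<tau>"
  shows "L_tau \<tau> \<xi> = (if \<bar>\<xi>\<bar> \<le> \<tau> then \<xi>\<^sup>2 else \<tau>\<^sup>2) / 2"
  using abs_le_square_iff[of \<xi> \<tau>] abs_le_square_iff[of \<tau> \<xi>] assms
  by (auto simp: L_tau_def min_def)

text \<open>The objective \<open>J\<close> of the alternating scheme, with \<open>(1 - \<omega>\<^sub>i)\<^sub>+\<close> written as \<open>1 - \<omega>\<^sub>i\<close>;
  the two agree for the weights in \<open>[0, 1]\<close> considered here.\<close>
definition surrogate_obj ::
    "real \<Rightarrow> real \<Rightarrow> real^'m^'m \<Rightarrow> real^'m \<Rightarrow> ('m \<Rightarrow> real) \<Rightarrow> real^'m \<Rightarrow> real \<Rightarrow> real" where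
  "surrogate_obj lam \<tau> K y \<omega> \<alpha> b =
     weighted_obj lam K y \<omega> \<alpha> b + (1 / real CARD('m::finite)) * (\<Sum>i\<in>UNIV. \<tau>\<^sup>2 / 2 * (1 - \<omega> i))"

lemma surrogate_obj_eq_sum:
  fixes K :: "real^'m^'m::finite"
  shows "surrogate_obj lam \<tau> K y \<omega> \<alpha> b =
     (lam / 2) * (\<alpha> \<bullet> (K *v \<alpha>))
     + (1 / real CARD('m))
       * (\<Sum>i\<in>UNIV. (\<omega> i * (resid K y \<alpha> b i)\<^sup>2 + (1 - \<omega> i) * \<tau>\<^sup>2) / 2)"
  unfolding surrogate_obj_def weighted_obj_def
  by (simp add: add_divide_distrib sum.distrib sum_divide_distrib mult.commute distrib_left)

lemma robust_obj_le_surrogate_obj: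
  fixes K :: "real^'m^'m::finite"
  assumes "\<And>i. 0 \<le> \<omega> i" and "\<And>i. \<omega> i \<le> 1"
  shows "robust_obj lam \<tau> K y (\<alpha>, b) \<le> surrogate_obj lam \<tau> K y \<omega> \<alpha> b"
  unfolding surrogate_obj_eq_sum robust_obj_def fst_conv snd_conv
  by (intro add_left_mono mult_left_mono sum_mono L_tau_le_convex_combination assms) simp_all

lemma robust_obj_eq_surrogate_obj_weights:
  fixes K :: "real^'m^'m::finite"
  assumes "0 \<le> \<tau>"
  shows "robust_obj lam \<tau> K y (\<alpha>, b) = surrogate_obj lam \<tau> K y (weights \<tau> K y \<alpha> b) \<alpha> b"
  unfolding surrogate_obj_eq_sum robust_obj_def weights_def L_tau_eq_if[OF assms] fst_conv snd_conv
  by (auto intro!: sum.cong)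

lemma majorant_has_derivative_zero:
  fixes f g :: "'a::real_normed_vector \<Rightarrow> real"
  assumes "(f has_derivative (\<lambda>h. 0)) (at p)" and "(g has_derivative g') (at p)"
    and "\<And>z. f z \<le> g z" and "f p = g p"
  shows "g' = (\<lambda>h. 0)"
proof -
  have "((\<lambda>z. g z - f z) has_derivative (\<lambda>h. g' h - 0)) (at p)"
    using assms(1,2) by (rule has_derivative_diff[rotated])
  moreover have "\<forall>\<^sub>F z in at p. g p - f p \<le> g z - f z"
    using assms(3,4) by (simp add: always_eventually)
  ultimately have "(\<lambda>h. g' h - 0) = (\<lambda>h. 0)"
    by (rule has_derivative_local_min)
  then show ?thesis by simp
qed

lemma weighted_obj_along_line:
  fixes K :: "real^'m^'m::finite"
  assumes "\<And>u. 0 \<le> u \<bullet> (K *v u)" and "\<And>i. 0 \<le> \<omega> i" and "0 \<le> lam"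
  obtains c q where "0 \<le> q"
    and "\<And>t. weighted_obj lam K y \<omega> (\<alpha> + t *\<^sub>R u) (b + t * v)
               = weighted_obj lam K y \<omega> \<alpha> b + c * t + q * t\<^sup>2"
proof
  define m where "m = real CARD('m)"
  define d where "d i = - (K *v u) $ i - v" for i
  have resid_line: "resid K y (\<alpha> + t *\<^sub>R u) (b + t * v) i = resid K y \<alpha> b i + t * d i" for t i
    unfolding resid_def d_def by (simp add: algebra_simps)
  define q where "q = (lam / 2) * (u \<bullet> (K *v u)) + (1 / (2 * m)) * (\<Sum>i\<in>UNIV. \<omega> i * (d i)\<^sup>2)"
  show "0 \<le> q"
    unfolding q_def m_def using assms by (intro add_nonneg_nonneg mult_nonneg_nonneg sum_nonneg) auto
  fix t :: real
  have quad: "(\<alpha> + t *\<^sub>R u) \<bullet> (K *v (\<alpha> + t *\<^sub>R u))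
      = \<alpha> \<bullet> (K *v \<alpha>) + t * (\<alpha> \<bullet> (K *v u) + u \<bullet> (K *v \<alpha>)) + t\<^sup>2 * (u \<bullet> (K *v u))"
    by (simp add: algebra_simps inner_add_left inner_add_right power2_eq_square)
  have squares: "(\<Sum>i\<in>UNIV. \<omega> i * (resid K y \<alpha> b i + t * d i)\<^sup>2)
      = (\<Sum>i\<in>UNIV. \<omega> i * (resid K y \<alpha> b i)\<^sup>2) + t * (\<Sum>i\<in>UNIV. 2 * \<omega> i * resid K y \<alpha> b i * d i)
        + t\<^sup>2 * (\<Sum>i\<in>UNIV. \<omega> i * (d i)\<^sup>2)"
    by (simp add: sum_distrib_left sum.distrib[symmetric] power2_eq_square algebra_simps)
  show "weighted_obj lam K y \<omega> (\<alpha> + t *\<^sub>R u) (b + t * v) = weighted_obj lam K y \<omega> \<alpha> b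
      + ((lam / 2) * (\<alpha> \<bullet> (K *v u) + u \<bullet> (K *v \<alpha>))
         + (1 / (2 * m)) * (\<Sum>i\<in>UNIV. 2 * \<omega> i * resid K y \<alpha> b i * d i)) * t + q * t\<^sup>2"
    unfolding weighted_obj_def resid_line quad squares q_def m_def by (simp add: algebra_simps)
qed

theorem proposition1:
  fixes x :: "'m::finite \<Rightarrow> real^'l"
    and y :: "real^'m"
    and k :: "real^'l \<Rightarrow> real^'l \<Rightarrow> real"
    and lam \<tau> :: real
    and \<alpha> :: "real^'m" and b :: real
  assumes "psd_kernel k"
    and "lam > 0" and "\<tau> \<ge> 0"
    and stationary: "(robust_obj lam \<tau> (kernel_matrix k x) y has_derivative (\<lambda>h. 0)) (at (\<alpha>, b))"
  shows "\<forall>\<alpha>' b'. weighted_obj lam (kernel_matrix k x) y (weights \<tau> (kernel_matrix k x) y \<alpha> b) \<alpha> b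
                 \<le> weighted_obj lam (kernel_matrix k x) y (weights \<tau> (kernel_matrix k x) y \<alpha> b) \<alpha>' b'"
proof (intro allI)
  fix \<alpha>' b'
  define K where "K = kernel_matrix k x"
  define \<omega> where "\<omega> = weights \<tau> K y \<alpha> b"
  have \<omega>_range: "0 \<le> \<omega> i" "\<omega> i \<le> 1" for i
    unfolding \<omega>_def weights_def by simp_all
  obtain c q where "0 \<le> q"
    and line: "\<And>t. weighted_obj lam K y \<omega> (\<alpha> + t *\<^sub>R (\<alpha>' - \<alpha>)) (b + t * (b' - b))
                   = weighted_obj lam K y \<omega> \<alpha> b + c * t + q * t\<^sup>2"
    using weighted_obj_along_line psd_kernel_quadratic_form_nonneg[OF assms(1)] \<omega>_range(1) assms(2)
    unfolding K_def by (metis less_imp_le)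
  let ?p = "\<lambda>t::real. (\<alpha> + t *\<^sub>R (\<alpha>' - \<alpha>), b + t * (b' - b))"
  have "(?p has_derivative (\<lambda>t. (t *\<^sub>R (\<alpha>' - \<alpha>), t * (b' - b)))) (at 0)"
    by (auto intro!: derivative_eq_intros)
  from has_derivative_compose[OF this] stationary[folded K_def]
  have "((\<lambda>t. robust_obj lam \<tau> K y (?p t)) has_derivative (\<lambda>h. 0)) (at 0)"
    by simp
  moreover have "((\<lambda>t. surrogate_obj lam \<tau> K y \<omega> (fst (?p t)) (snd (?p t))) has_derivative (\<lambda>h. h * c)) (at 0)"
    unfolding surrogate_obj_def fst_conv snd_conv line by (auto intro!: derivative_eq_intros)
  ultimately have "(\<lambda>h. h * c) = (\<lambda>h::real. 0)"
  proof (rule majorant_has_derivative_zero)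
    show "robust_obj lam \<tau> K y (?p t) \<le> surrogate_obj lam \<tau> K y \<omega> (fst (?p t)) (snd (?p t))" for t
      by (simp add: robust_obj_le_surrogate_obj \<omega>_range)
    show "robust_obj lam \<tau> K y (?p 0) = surrogate_obj lam \<tau> K y \<omega> (fst (?p 0)) (snd (?p 0))"
      by (simp add: robust_obj_eq_surrogate_obj_weights[OF assms(3)] \<omega>_def)
  qed
  then have "c = 0" by (metis mult_1)
  then show "weighted_obj lam K y \<omega> \<alpha> b \<le> weighted_obj lam K y \<omega> \<alpha>' b'"
    using line[of 1] \<open>0 \<le> q\<close> by simp
qed

end
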